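(* Let $G=S^1$ and let $\rho\colon G\to U(n)\subset O(2n)$ be an orthogonal representation. Then there exists a smooth action of $G$ on $X^{2n}=S^2\times\dots\times S^2$ ($n$ factors) such that for every point $x\in X^{2n}$, the representation of the isotropy group $G_x$ on the tangent space $T_x(X^{2n})$ is isomorphic to $\mathrm{Res}^G_{G_x}(\rho)$.
   Context: $G_x$ is the isotropy subgroup of $x$; $\mathrm{Res}^G_{G_x}(\rho)$ is the restriction of $\rho$ (viewed as a real $2n$-dimensional representation) to $G_x$. *)

theory Defs
  imports "HOL-Analysis.Analysis"
begin

definition circle_group :: "complex set" where
  "circle_group = sphere 0 1"

text \<open>C-infinity smoothness on an open set U between Euclidean spaces: there is a family of
  functions containing f, closed under taking (Frechet) directional derivatives, all of whose
  members are differentiable at every point of U.  (All iterated derivatives exist.)\<close>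
definition smooth_on :: "'a::euclidean_space set \<Rightarrow> ('a \<Rightarrow> 'b::euclidean_space) \<Rightarrow> bool" where
  "smooth_on U f \<longleftrightarrow> open U \<and>
     (\<exists>F. f \<in> F \<and> (\<forall>h\<in>F. \<forall>x\<in>U. h differentiable (at x)) \<and>
          (\<forall>h\<in>F. \<forall>v. (\<lambda>x. frechet_derivative h (at x) v) \<in> F))"

definition conj_transpose :: "complex^'n^'n \<Rightarrow> complex^'n^'n" where
  "conj_transpose A = (\<chi> i j. cnj (A $ j $ i))"

definition unitary :: "complex^'n^'n \<Rightarrow> bool" where
  "unitary A \<longleftrightarrow> conj_transpose A ** A = mat 1 \<and> A ** conj_transpose A = mat 1"

text \<open>A unitary representation rho : S^1 -> U(n) (continuous homomorphism).  Viewed as a real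
  representation on C^n = R^{2n}, it is an orthogonal representation with image in U(n) \<subseteq> O(2n).\<close>
definition unitary_rep :: "(complex \<Rightarrow> complex^'n^'n) \<Rightarrow> bool" where
  "unitary_rep \<rho> \<longleftrightarrow> continuous_on circle_group \<rho> \<and>
     (\<forall>g\<in>circle_group. unitary (\<rho> g)) \<and>
     (\<forall>g\<in>circle_group. \<forall>h\<in>circle_group. \<rho> (g * h) = \<rho> g ** \<rho> h)"

definition sphere_product :: "(real^3^'n) set" where
  "sphere_product = {x. \<forall>i. norm (x $ i) = 1}"

definition smooth_circle_action :: "(complex \<Rightarrow> 'a::euclidean_space \<Rightarrow> 'a) \<Rightarrow> 'a set \<Rightarrow> bool" where
  "smooth_circle_action a X \<longleftrightarrow>
     (\<forall>g\<in>circle_group. \<forall>x\<in>X. a g x \<in> X) \<and>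
     (\<forall>x\<in>X. a 1 x = x) \<and>
     (\<forall>g\<in>circle_group. \<forall>h\<in>circle_group. \<forall>x\<in>X. a (g * h) x = a g (a h x)) \<and>
     (\<exists>U F. circle_group \<times> X \<subseteq> U \<and> smooth_on U F \<and>
            (\<forall>g\<in>circle_group. \<forall>x\<in>X. F (g, x) = a g x))"

definition curve_through :: "'a::real_normed_vector set \<Rightarrow> 'a \<Rightarrow> (real \<Rightarrow> 'a) \<Rightarrow> 'a \<Rightarrow> bool" where
  "curve_through S x \<gamma> v \<longleftrightarrow> \<gamma> 0 = x \<and> (\<exists>e>0. \<forall>t. \<bar>t\<bar> < e \<longrightarrow> \<gamma> t \<in> S) \<and>
     (\<gamma> has_vector_derivative v) (at 0)"

definition tangent_space :: "'a::real_normed_vector set \<Rightarrow> 'a \<Rightarrow> 'a set" where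
  "tangent_space S x = {v. \<exists>\<gamma>. curve_through S x \<gamma> v}"

definition isotropy :: "(complex \<Rightarrow> 'a \<Rightarrow> 'a) \<Rightarrow> 'a \<Rightarrow> complex set" where
  "isotropy a x = {g \<in> circle_group. a g x = x}"

text \<open>The isotropy representation of G_x on T_x X (g acts by the differential of a g at x) is
  isomorphic to Res(rho) (rho viewed as a real 2n-dimensional representation on C^n):
  there is a real-linear isomorphism phi : C^n -> T_x X intertwining the two actions.\<close>
definition isotropy_rep_iso ::
  "(complex \<Rightarrow> 'a::euclidean_space \<Rightarrow> 'a) \<Rightarrow> 'a set \<Rightarrow> (complex \<Rightarrow> complex^'n^'n) \<Rightarrow> 'a \<Rightarrow> bool" where
  "isotropy_rep_iso a X \<rho> x \<longleftrightarrow>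
     (\<exists>\<phi> :: complex^'n \<Rightarrow> 'a. linear \<phi> \<and> inj \<phi> \<and> range \<phi> = tangent_space X x \<and>
        (\<forall>g\<in>isotropy a x. \<forall>u \<gamma>. curve_through X x \<gamma> (\<phi> u) \<longrightarrow>
            ((\<lambda>t. a g (\<gamma> t)) has_vector_derivative \<phi> (\<rho> g *v u)) (at 0)))"

end

theory Submission
  imports Defs "HOL-Computational_Algebra.Fundamental_Theorem_Algebra"
begin

(* A unitary representation of the circle is a sum of characters: the matrices \<rho> g commute
   and the family is closed under adjoints (\<rho> g\<^sup>* = \<rho> (cnj g)), so they have a common
   eigenbasis, and every continuous character of the circle is g \<mapsto> g^k.  With \<rho> \<cong> \<oplus>\<^sub>i g^(k i),
   let g rotate the i-th sphere about the vertical axis by g^(k i).  At a pole the tangent plane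
   is \<complex> and g acts on it by multiplication with g^(k i); at any other point of the i-th sphere an
   element of the isotropy group fixes a point off the axis, so g^(k i) = 1 and it acts trivially
   on that tangent plane as well.  Either way G\<^sub>x acts on T\<^sub>xX as \<rho> does on \<complex>^n. *)

section \<open>Characters of the circle group\<close>

(* On the circle cnj g = inverse g, so this is g^k; using cnj keeps it polynomial in Re g, Im g. *)
definition circle_char :: "int \<Rightarrow> complex \<Rightarrow> complex" where
  "circle_char k g = (if 0 \<le> k then g ^ nat k else cnj g ^ nat (-k))"

lemma circle_char_one [simp]: "circle_char k 1 = 1"
  by (simp add: circle_char_def)

lemma circle_char_mult: "circle_char k (g * h) = circle_char k g * circle_char k h"
  by (simp add: circle_char_def power_mult_distrib)

lemma norm_circle_char: "norm g = 1 \<Longrightarrow> norm (circle_char k g) = 1"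
  by (simp add: circle_char_def norm_power)

lemma circle_char_cis: "circle_char k (cis t) = cis (of_int k * t)"
proof (cases "0 \<le> k")
  case True
  then show ?thesis by (simp add: circle_char_def Complex.DeMoivre)
next
  case False
  then have "circle_char k (cis t) = cis (real (nat (-k)) * - t)"
    by (simp add: circle_char_def cis_cnj Complex.DeMoivre)
  with False show ?thesis by simp
qed

lemma continuous_additive_real_eq_scale:
  fixes \<theta> :: "real \<Rightarrow> real"
  assumes cont: "continuous_on UNIV \<theta>" and add: "\<And>s t. \<theta> (s + t) = \<theta> s + \<theta> t"
  shows "\<theta> t = t * \<theta> 1"
proof -
  have zero: "\<theta> 0 = 0" using add[of 0 0] by simp
  have nat: "\<theta> (real n * t) = real n * \<theta> t" for n t
    by (induction n) (auto simp: zero distrib_right add)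
  have neg: "\<theta> (- t) = - \<theta> t" for t using add[of t "-t"] zero by simp
  have int: "\<theta> (of_int m * t) = of_int m * \<theta> t" for m t
  proof (cases "m \<ge> 0")
    case True then show ?thesis using nat[of "nat m" t] by simp
  next
    case False
    then have "\<theta> (of_int m * t) = \<theta> (- (real (nat (-m)) * t))" by simp
    also have "\<dots> = of_int m * \<theta> t" using neg nat[of "nat (-m)" t] False by simp
    finally show ?thesis .
  qed
  have rat: "\<theta> q = q * \<theta> 1" if "q \<in> \<rat>" for q
  proof -
    obtain a b where ab: "b > 0" "q = of_int a / of_int b"
      using Rats_cases'[OF \<open>q \<in> \<rat>\<close>] by blast
    have "of_int a * \<theta> 1 = \<theta> (of_int a * 1)" using int[of a 1] by simp
    also have "of_int a * 1 = of_int b * q" using ab by simp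
    also have "\<theta> (of_int b * q) = of_int b * \<theta> q" using int by simp
    finally have "of_int a * \<theta> 1 = of_int b * \<theta> q" .
    then have "\<theta> q = of_int a * \<theta> 1 / of_int b" using ab(1) by (simp add: field_simps)
    then show ?thesis using ab(2) by simp
  qed
  have "closed {t. \<theta> t = t * \<theta> 1}"
    by (rule closed_Collect_eq[OF cont]) (intro continuous_intros)
  then have "closure \<rat> \<subseteq> {t. \<theta> t = t * \<theta> 1}"
    using rat by (intro closure_minimal) blast+
  then show ?thesis using Rats_closure_real by auto
qed

lemma continuous_exp_eq_1_imp_constant:
  fixes d :: "'a::topological_space \<Rightarrow> complex"
  assumes "connected S" "continuous_on S d" and exp_d: "\<And>t. t \<in> S \<Longrightarrow> exp (d t) = 1"
  shows "d constant_on S"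
proof (rule continuous_discrete_range_constant[OF assms(1,2)])
  fix x assume x: "x \<in> S"
  have "2 * pi \<le> norm (d y - d x)" if y: "y \<in> S" "d y \<noteq> d x" for y
  proof (rule ccontr)
    assume "\<not> 2 * pi \<le> norm (d y - d x)"
    moreover have "\<bar>Im (d y) - Im (d x)\<bar> \<le> norm (d y - d x)"
      by (metis abs_Im_le_cmod minus_complex.simps(2))
    ultimately have "\<bar>Im (d y) - Im (d x)\<bar> < 2 * pi" by linarith
    moreover have "exp (d y) = exp (d x)" using exp_d x y(1) by simp
    ultimately have "d y = d x" by (rule exp_complex_eqI)
    with y(2) show False ..
  qed
  then show "\<exists>e>0. \<forall>y. y \<in> S \<and> d y \<noteq> d x \<longrightarrow> e \<le> norm (d y - d x)"
    using pi_gt_zero by (intro exI[of _ "2 * pi"]) auto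
qed

lemma continuous_real_hom_nonzero_eq_exp:
  fixes f :: "real \<Rightarrow> complex"
  assumes cont: "continuous_on UNIV f"
    and hom: "\<And>s t. f (s + t) = f s * f t" and nz: "\<And>t. f t \<noteq> 0"
  shows "\<exists>c. \<forall>t. f t = exp (of_real t * c)"
proof -
  obtain h where h_cont: "continuous_on UNIV h" and f_eq: "\<And>t. f t = exp (h t)"
    by (rule continuous_logarithm_on_contractible[OF cont contractible_UNIV]) (use nz in auto)
  have f0: "f 0 = 1" using hom[of 0 0] nz[of 0] by simp
  have h_add: "h (s + t) - h s - h t = - h 0" for s t
  proof -
    let ?d = "\<lambda>t. h (s + t) - h s - h t"
    have "continuous_on UNIV (\<lambda>t. h (s + t))"
      by (rule continuous_on_compose2[OF h_cont]) (auto intro: continuous_intros)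
    then have "continuous_on UNIV ?d"
      using h_cont by (intro continuous_on_diff continuous_on_const)
    moreover have "exp (?d t) = 1" for t
      using hom[of s t] nz[of s] nz[of t] by (simp add: f_eq exp_diff)
    ultimately have "?d constant_on UNIV"
      by (intro continuous_exp_eq_1_imp_constant) auto
    then obtain c where "\<And>x. ?d x = c" by (auto simp: constant_on_def)
    from this[of t] this[of 0] show ?thesis by simp
  qed
  define H where "H t = h t - h 0" for t
  have H_add: "H (s + t) = H s + H t" for s t using h_add[of s t] by (simp add: H_def algebra_simps)
  have H_cont: "continuous_on UNIV H"
    unfolding H_def using h_cont by (intro continuous_on_diff continuous_on_const)
  have H_eq: "H t = of_real t * H 1" for t
  proof -
    have "Re (H t) = t * Re (H 1)"
      by (rule continuous_additive_real_eq_scale) (simp_all add: continuous_on_Re[OF H_cont] H_add)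
    moreover have "Im (H t) = t * Im (H 1)"
      by (rule continuous_additive_real_eq_scale) (simp_all add: continuous_on_Im[OF H_cont] H_add)
    ultimately show ?thesis by (simp add: complex_eq_iff)
  qed
  have "f t = exp (of_real t * H 1)" for t
  proof -
    have "f t = exp (H t)" using f_eq[of t] f_eq[of 0] f0 by (simp add: H_def exp_diff)
    then show ?thesis by (simp only: H_eq[of t])
  qed
  then show ?thesis by blast
qed

lemma continuous_circle_hom_eq_circle_char:
  fixes \<psi> :: "complex \<Rightarrow> complex"
  assumes cont: "continuous_on circle_group \<psi>"
    and hom: "\<And>g h. g \<in> circle_group \<Longrightarrow> h \<in> circle_group \<Longrightarrow> \<psi> (g * h) = \<psi> g * \<psi> h"
    and nz: "\<And>g. g \<in> circle_group \<Longrightarrow> \<psi> g \<noteq> 0"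
  shows "\<exists>k. \<forall>g\<in>circle_group. \<psi> g = circle_char k g"
proof -
  have cis_in: "cis t \<in> circle_group" for t by (simp add: circle_group_def)
  have "continuous_on UNIV (\<lambda>t. \<psi> (cis t))"
    by (rule continuous_on_compose2[OF cont]) (auto intro: continuous_intros simp: cis_in)
  moreover have "\<psi> (cis (s + t)) = \<psi> (cis s) * \<psi> (cis t)" for s t
    using hom[OF cis_in cis_in] by (simp add: cis_mult)
  ultimately obtain c where c: "\<And>t. \<psi> (cis t) = exp (of_real t * c)"
    using continuous_real_hom_nonzero_eq_exp[of "\<lambda>t. \<psi> (cis t)"] nz[OF cis_in] by blast
  have "exp (of_real (2 * pi) * c) = 1"
    using c[of "2 * pi"] hom[of 1 1] nz[of 1] by (simp add: circle_group_def)
  then obtain n :: int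
    where "Re (of_real (2 * pi) * c) = 0" "Im (of_real (2 * pi) * c) = of_int (2 * n) * pi"
    by (auto simp: exp_eq_1)
  then have "c = \<i> * of_int n" by (simp add: complex_eq_iff)
  then have "exp (of_real t * c) = cis (of_int n * t)" for t
    by (simp add: cis_conv_exp mult_ac)
  then have \<psi>_cis: "\<psi> (cis t) = circle_char n (cis t)" for t
    using c by (simp add: circle_char_cis)
  have "\<psi> g = circle_char n g" if "g \<in> circle_group" for g
  proof -
    have "norm g = 1" using that by (simp add: circle_group_def)
    then have "g = cis (Arg g)"
      using cis_Arg[of g] by (simp add: sgn_eq) (metis norm_zero zero_neq_one)
    then show ?thesis using \<psi>_cis by metis
  qed
  then show ?thesis by blast
qed

section \<open>Simultaneous diagonalisation of commuting normal matrices\<close>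

definition poly_mat_apply :: "complex poly \<Rightarrow> complex^'n^'n \<Rightarrow> complex^'n \<Rightarrow> complex^'n" where
  "poly_mat_apply p A w = (\<Sum>j\<le>degree p. coeff p j *s ((*v) A ^^ j) w)"

lemma poly_mat_apply_eq_sum:
  "degree p \<le> N \<Longrightarrow> poly_mat_apply p A w = (\<Sum>j\<le>N. coeff p j *s ((*v) A ^^ j) w)"
  unfolding poly_mat_apply_def by (rule sum.mono_neutral_left) (auto simp: coeff_eq_0)

lemma poly_mat_apply_const: "degree p = 0 \<Longrightarrow> poly_mat_apply p A w = coeff p 0 *s w"
  by (simp add: poly_mat_apply_def)

lemma poly_mat_apply_linear_factor:
  "poly_mat_apply ([:-z, 1:] * q) A w = A *v poly_mat_apply q A w - z *s poly_mat_apply q A w"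
proof -
  let ?N = "Suc (degree q)"
  let ?w = "\<lambda>j. ((*v) A ^^ j) w"
  have "degree ([:-z, 1:] * q) \<le> ?N"
    using degree_mult_le[of "[:-z, 1:]" q] by simp
  then have "poly_mat_apply ([:-z, 1:] * q) A w = (\<Sum>j\<le>?N. coeff ([:-z, 1:] * q) j *s ?w j)"
    by (rule poly_mat_apply_eq_sum)
  also have "\<dots> = (\<Sum>j\<le>?N. coeff (pCons 0 q) j *s ?w j) - z *s (\<Sum>j\<le>?N. coeff q j *s ?w j)"
    by (simp add: vector_sadd_rdistrib vector_sub_rdistrib sum.distrib sum_subtractf
        vec.scale_sum_right vector_smult_assoc algebra_simps)
  also have "(\<Sum>j\<le>?N. coeff (pCons 0 q) j *s ?w j) = (\<Sum>j\<le>degree q. coeff q j *s ?w (Suc j))"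
    by (subst sum.atMost_Suc_shift) simp
  also have "\<dots> = A *v poly_mat_apply q A w"
    by (simp add: poly_mat_apply_def vec.sum vec.scale)
  also have "(\<Sum>j\<le>?N. coeff q j *s ?w j) = poly_mat_apply q A w"
    by (rule poly_mat_apply_eq_sum[symmetric]) simp
  finally show ?thesis .
qed

lemma poly_mat_apply_in_subspace:
  assumes "vec.subspace W" "\<And>v. v \<in> W \<Longrightarrow> A *v v \<in> W" "w \<in> W"
  shows "poly_mat_apply p A w \<in> W"
proof -
  have "((*v) A ^^ j) w \<in> W" for j
    by (induction j) (simp_all add: assms)
  then show ?thesis
    unfolding poly_mat_apply_def by (intro vec.subspace_sum vec.subspace_scale assms(1))
qed

lemma vec_family_dependent:
  fixes f :: "'i \<Rightarrow> complex^'n"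
  assumes fin: "finite I" and card: "CARD('n) < card I"
  shows "\<exists>c. (\<exists>i\<in>I. c i \<noteq> 0) \<and> (\<Sum>i\<in>I. c i *s f i) = 0"
proof (cases "inj_on f I")
  case False
  then obtain i j where ij: "i \<in> I" "j \<in> I" "i \<noteq> j" "f i = f j"
    unfolding inj_on_def by blast
  define c :: "'i \<Rightarrow> complex" where "c k = (if k = i then 1 else if k = j then -1 else 0)" for k
  have "(\<Sum>k\<in>I. c k *s f k) = (\<Sum>k\<in>I. (if k = i then f i else 0) - (if k = j then f j else 0))"
    using ij(3,4) by (intro sum.cong) (auto simp: c_def)
  also have "\<dots> = 0" using fin ij by (simp add: sum_subtractf)
  finally have "(\<Sum>k\<in>I. c k *s f k) = 0" .
  moreover have "c i \<noteq> 0" by (simp add: c_def)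
  ultimately show ?thesis using ij(1) by blast
next
  case True
  have "vec.dim (f ` I) \<le> vec.dim (UNIV :: (complex^'n) set)" by (rule vec.dim_subset) simp
  also have "\<dots> < card (f ` I)" using card True by (simp add: card_cart_basis card_image)
  finally have "vec.dependent (f ` I)" by (intro vec.dependent_biggerset_general) simp
  then obtain u where u: "\<exists>v\<in>f ` I. u v \<noteq> 0" "(\<Sum>v\<in>f ` I. u v *s v) = 0"
    using vec.dependent_finite[of "f ` I"] fin by auto
  have "(\<Sum>i\<in>I. u (f i) *s f i) = 0" using u(2) sum.reindex[OF True, of "\<lambda>v. u v *s v"] by simp
  with u(1) show ?thesis by (intro exI[of _ "u \<circ> f"]) auto
qed

lemma poly_mat_annihilator_exists:
  fixes A :: "complex^'n^'n"
  shows "\<exists>p. p \<noteq> 0 \<and> poly_mat_apply p A w = 0"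
proof -
  define N where "N = CARD('n)"
  obtain c where c: "\<exists>i\<le>N. c i \<noteq> 0" "(\<Sum>i\<le>N. c i *s ((*v) A ^^ i) w) = 0"
    using vec_family_dependent[of "{..N}" "\<lambda>i. ((*v) A ^^ i) w"] by (auto simp: N_def)
  define p where "p = (\<Sum>j\<le>N. monom (c j) j)"
  have coeff_p: "coeff p k = (if k \<le> N then c k else 0)" for k
    by (simp add: p_def coeff_sum coeff_monom)
  then have "degree p \<le> N" by (intro degree_le) simp
  then have "poly_mat_apply p A w = 0" using c(2) by (simp add: poly_mat_apply_eq_sum coeff_p)
  moreover have "p \<noteq> 0" using c(1) coeff_p by (metis coeff_0)
  ultimately show ?thesis by blast
qed

definition invariant_subspace :: "(complex^'n^'n) set \<Rightarrow> (complex^'n) set \<Rightarrow> bool" where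
  "invariant_subspace \<A> W \<longleftrightarrow> vec.subspace W \<and> (\<forall>A\<in>\<A>. \<forall>v\<in>W. A *v v \<in> W)"

definition common_eigenvectors :: "(complex^'n^'n) set \<Rightarrow> (complex^'n) set" where
  "common_eigenvectors \<A> = {v. v \<noteq> 0 \<and> (\<forall>A\<in>\<A>. \<exists>c. A *v v = c *s v)}"

lemma eigenvector_in_subspace_if_annihilated:
  assumes W: "vec.subspace W" "\<And>v. v \<in> W \<Longrightarrow> A *v v \<in> W"
  shows "p \<noteq> 0 \<Longrightarrow> v \<in> W \<Longrightarrow> v \<noteq> 0 \<Longrightarrow> poly_mat_apply p A v = 0 \<Longrightarrow>
    \<exists>u\<in>W. u \<noteq> 0 \<and> (\<exists>z. A *v u = z *s u)"
proof (induction "degree p" arbitrary: p v rule: less_induct)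
  case less
  show ?case
  proof (cases "degree p = 0")
    case True
    then have "coeff p 0 \<noteq> 0" using leading_coeff_neq_0[OF \<open>p \<noteq> 0\<close>] by simp
    then show ?thesis using less.prems True by (simp add: poly_mat_apply_const)
  next
    case False
    then have "\<not> constant (poly p)" by (simp add: constant_degree)
    then obtain z where "poly p z = 0" using fundamental_theorem_of_algebra by blast
    then obtain q where pq: "p = [:-z, 1:] * q"
      by (metis dvdE poly_eq_0_iff_dvd)
    with \<open>p \<noteq> 0\<close> have "q \<noteq> 0" by auto
    then have "degree q < degree p" unfolding pq by (subst degree_mult_eq) auto
    define u where "u = poly_mat_apply q A v"
    have "u \<in> W" unfolding u_def using W less.prems(2) by (rule poly_mat_apply_in_subspace)
    moreover have "A *v u = z *s u"
      using less.prems(4) unfolding pq poly_mat_apply_linear_factor u_def by simp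
    moreover have "u = 0 \<Longrightarrow> ?thesis"
      using less.hyps[OF \<open>degree q < degree p\<close> \<open>q \<noteq> 0\<close>] less.prems(2,3) by (simp add: u_def)
    ultimately show ?thesis by blast
  qed
qed

lemma eigenvector_in_invariant_subspace:
  fixes A :: "complex^'n^'n"
  assumes "vec.subspace W" "\<And>v. v \<in> W \<Longrightarrow> A *v v \<in> W" "W \<noteq> {0}"
  shows "\<exists>u\<in>W. u \<noteq> 0 \<and> (\<exists>z. A *v u = z *s u)"
proof -
  obtain w where "w \<in> W" "w \<noteq> 0" using assms(1,3) vec.subspace_0 by blast
  moreover obtain p where "p \<noteq> 0" "poly_mat_apply p A w = 0"
    using poly_mat_annihilator_exists by blast
  ultimately show ?thesis using eigenvector_in_subspace_if_annihilated[OF assms(1,2)] by blast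
qed

lemma invariant_subspace_eigenspace:
  assumes comm: "\<And>A B. A \<in> \<A> \<Longrightarrow> B \<in> \<A> \<Longrightarrow> A ** B = B ** A"
    and W: "invariant_subspace \<A> W" and "A \<in> \<A>"
  shows "invariant_subspace \<A> {x \<in> W. A *v x = z *s x}"
  unfolding invariant_subspace_def
proof (intro conjI ballI)
  show "vec.subspace {x \<in> W. A *v x = z *s x}"
    using W unfolding invariant_subspace_def vec.subspace_def
    by (auto simp: matrix_vector_right_distrib vec.scale vector_smult_assoc mult.commute
        vec.scale_right_distrib)
  fix B x assume B: "B \<in> \<A>" and x: "x \<in> {x \<in> W. A *v x = z *s x}"
  have "A *v (B *v x) = B *v (A *v x)"
    using comm[OF \<open>A \<in> \<A>\<close> B] by (simp add: matrix_vector_mul_assoc)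
  also have "\<dots> = z *s (B *v x)" using x by (simp add: vec.scale)
  finally show "B *v x \<in> {x \<in> W. A *v x = z *s x}"
    using W B x by (auto simp: invariant_subspace_def)
qed

lemma common_eigenvector_exists:
  assumes comm: "\<And>A B. A \<in> \<A> \<Longrightarrow> B \<in> \<A> \<Longrightarrow> A ** B = B ** A"
    and V: "invariant_subspace \<A> V" "V \<noteq> {0}"
  shows "V \<inter> common_eigenvectors \<A> \<noteq> {}"
proof -
  define P where "P d \<longleftrightarrow> (\<exists>W. invariant_subspace \<A> W \<and> W \<subseteq> V \<and> W \<noteq> {0} \<and> vec.dim W = d)" for d
  have "P (vec.dim V)" using V by (auto simp: P_def)
  then have "P (LEAST d. P d)" by (rule LeastI)
  then obtain W where W: "invariant_subspace \<A> W" "W \<subseteq> V" "W \<noteq> {0}" "vec.dim W = (LEAST d. P d)"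
    by (auto simp: P_def)
  then have W_sub: "vec.subspace W" by (simp add: invariant_subspace_def)
  (* By minimality of W, every A in \<A> acts on W as a scalar. *)
  have scalar: "\<exists>z. \<forall>x\<in>W. A *v x = z *s x" if A: "A \<in> \<A>" for A
  proof -
    have "\<And>v. v \<in> W \<Longrightarrow> A *v v \<in> W" using W(1) A by (simp add: invariant_subspace_def)
    from eigenvector_in_invariant_subspace[OF W_sub this W(3)]
    obtain u z where u: "u \<in> W" "u \<noteq> 0" "A *v u = z *s u" by blast
    define K where "K = {x \<in> W. A *v x = z *s x}"
    have K: "invariant_subspace \<A> K"
      unfolding K_def by (rule invariant_subspace_eigenspace[OF comm W(1) A])
    moreover have "K \<subseteq> V" "K \<noteq> {0}" using u W(2) by (auto simp: K_def)
    ultimately have "P (vec.dim K)" unfolding P_def by blast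
    then have "vec.dim W \<le> vec.dim K" using W(4) by (simp add: Least_le)
    then have "K = W"
      using vec.subspace_dim_equal[of K W] K W_sub by (auto simp: K_def invariant_subspace_def)
    then show ?thesis by (auto simp: K_def)
  qed
  obtain w where "w \<in> W" "w \<noteq> 0" using W(3) W_sub vec.subspace_0 by blast
  then have "w \<in> V \<inter> common_eigenvectors \<A>"
    using scalar W(2) by (fastforce simp: common_eigenvectors_def)
  then show ?thesis by blast
qed

definition cinner :: "complex^'n \<Rightarrow> complex^'n \<Rightarrow> complex" where
  "cinner v w = (\<Sum>i\<in>UNIV. v $ i * cnj (w $ i))"

lemma Re_cinner: "Re (cinner v w) = v \<bullet> w"
  by (simp add: cinner_def inner_vec_def inner_complex_def Re_sum)

lemma Im_cinner: "Im (cinner v w) = v \<bullet> (\<i> *s w)"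
  by (simp add: cinner_def inner_vec_def inner_complex_def Im_sum algebra_simps)

lemma cinner_matrix_vector_mult: "cinner (A *v v) w = cinner v (conj_transpose A *v w)"
proof -
  have "cinner (A *v v) w = (\<Sum>i\<in>UNIV. \<Sum>j\<in>UNIV. A$i$j * v$j * cnj (w$i))"
    by (simp add: cinner_def matrix_vector_mult_def sum_distrib_right)
  also have "\<dots> = (\<Sum>j\<in>UNIV. \<Sum>i\<in>UNIV. A$i$j * v$j * cnj (w$i))" by (rule sum.swap)
  also have "\<dots> = cinner v (conj_transpose A *v w)"
    by (simp add: cinner_def matrix_vector_mult_def conj_transpose_def sum_distrib_left mult_ac)
  finally show ?thesis .
qed

lemma vec_subspace_orthogonal_cinner:
  "vec.subspace {v. \<forall>e\<in>E. cinner v e = 0}"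
  by (simp add: vec.subspace_def cinner_def distrib_right sum.distrib mult.assoc flip: sum_distrib_left)

lemma scaleR_eq_of_real_scale: "r *\<^sub>R (x::complex^'n) = complex_of_real r *s x"
proof -
  have "(r *\<^sub>R x) $ i = (complex_of_real r *s x) $ i" for i
    unfolding vector_scaleR_component vector_smult_component by (rule scaleR_conv_of_real)
  then show ?thesis by (simp add: vec_eq_iff)
qed

lemma exists_orthogonal_cinner:
  fixes E :: "(complex^'n) set"
  assumes "vec.subspace E" "E \<noteq> UNIV"
  shows "\<exists>x. x \<noteq> 0 \<and> (\<forall>e\<in>E. cinner x e = 0)"
proof -
  (* A nonzero real-orthogonal vector to E is cinner-orthogonal, as E is closed under \<i> *s _. *)
  have E: "subspace E"
    using assms(1) unfolding subspace_def vec.subspace_def by (simp add: scaleR_eq_of_real_scale)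
  have "dim E < DIM(complex^'n)"
    using dim_subset_UNIV[of E] dim_eq_full[of E] assms(2) E by (metis le_neq_implies_less span_eq_iff)
  then obtain x :: "complex^'n" where x: "x \<noteq> 0" "\<And>y. y \<in> span E \<Longrightarrow> orthogonal x y"
    using orthogonal_to_subspace_exists by blast
  have "cinner x e = 0" if "e \<in> E" for e
  proof -
    have "\<i> *s e \<in> E" using that assms(1) by (rule vec.subspace_scale[rotated])
    then have "x \<bullet> e = 0" "x \<bullet> (\<i> *s e) = 0"
      using x(2) that span_superset by (auto simp: orthogonal_def)
    then show ?thesis by (simp add: complex_eq_iff Re_cinner Im_cinner)
  qed
  with x(1) show ?thesis by blast
qed

lemma invariant_subspace_orthogonal_cinner:
  assumes adj: "\<And>A. A \<in> \<A> \<Longrightarrow> conj_transpose A \<in> \<A>"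
    and E: "\<And>A e. A \<in> \<A> \<Longrightarrow> e \<in> E \<Longrightarrow> A *v e \<in> E"
  shows "invariant_subspace \<A> {v. \<forall>e\<in>E. cinner v e = 0}"
  unfolding invariant_subspace_def
  using vec_subspace_orthogonal_cinner adj E by (simp add: cinner_matrix_vector_mult)

lemma span_common_eigenvectors:
  assumes comm: "\<And>A B. A \<in> \<A> \<Longrightarrow> B \<in> \<A> \<Longrightarrow> A ** B = B ** A"
    and adj: "\<And>A. A \<in> \<A> \<Longrightarrow> conj_transpose A \<in> \<A>"
  shows "vec.span (common_eigenvectors \<A>) = (UNIV :: (complex^'n) set)"
proof (rule ccontr)
  define E where "E = vec.span (common_eigenvectors \<A>)"
  assume "vec.span (common_eigenvectors \<A>) \<noteq> (UNIV :: (complex^'n) set)"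
  then obtain x :: "complex^'n" where x: "x \<noteq> 0" "\<forall>e\<in>E. cinner x e = 0"
    using exists_orthogonal_cinner[of E] vec.subspace_span by (auto simp: E_def)
  have E_inv: "A *v e \<in> E" if A: "A \<in> \<A>" and "e \<in> E" for A e
    using \<open>e \<in> E\<close> unfolding E_def
  proof (induction rule: vec.span_induct_alt)
    case base
    show ?case by (simp add: vec.span_zero)
  next
    case (step c x y)
    obtain d where "A *v x = d *s x" using A step.hyps(1) by (auto simp: common_eigenvectors_def)
    then have "A *v (c *s x + y) = (c * d) *s x + A *v y"
      by (simp add: matrix_vector_right_distrib vec.scale vector_smult_assoc)
    then show ?case using step by (simp add: vec.span_add vec.span_scale vec.span_base)
  qed
  let ?V = "{v. \<forall>e\<in>E. cinner v e = 0}"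
  have "invariant_subspace \<A> ?V" using adj E_inv by (rule invariant_subspace_orthogonal_cinner)
  moreover have "?V \<noteq> {0}" using x by auto
  ultimately obtain v where v: "v \<in> ?V" "v \<in> common_eigenvectors \<A>"
    using common_eigenvector_exists[OF comm] by blast
  then have "cinner v v = 0" by (auto simp: E_def intro: vec.span_base)
  then have "v \<bullet> v = 0" using Re_cinner[of v v] by simp
  with v(2) show False by (simp add: common_eigenvectors_def)
qed

lemma common_eigenbasis:
  assumes comm: "\<And>A B. A \<in> \<A> \<Longrightarrow> B \<in> \<A> \<Longrightarrow> A ** B = B ** A"
    and adj: "\<And>A. A \<in> \<A> \<Longrightarrow> conj_transpose A \<in> \<A>"
  obtains \<beta> :: "'n \<Rightarrow> complex^'n"
  where "\<And>i. \<beta> i \<in> common_eigenvectors \<A>" "surj (\<lambda>w. \<Sum>i\<in>UNIV. w $ i *s \<beta> i)"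
proof -
  obtain B where B: "B \<subseteq> common_eigenvectors \<A>" "vec.independent B"
      "common_eigenvectors \<A> \<subseteq> vec.span B"
    by (rule vec.maximal_independent_subset)
  have "vec.span (common_eigenvectors \<A>) \<subseteq> vec.span B"
    using vec.span_mono[OF B(3)] by (metis vec.span_span)
  then have span_B: "vec.span B = UNIV" using span_common_eigenvectors[OF comm adj] by auto
  have "finite B" using B(2) vec.finiteI_independent by blast
  moreover have "card B = CARD('n)"
    using vec.basis_card_eq_dim[of B UNIV] B(2) span_B by (simp add: card_cart_basis)
  ultimately obtain \<beta> where \<beta>: "bij_betw \<beta> (UNIV :: 'n set) B"
    using finite_same_card_bij[of "UNIV :: 'n set" B] by auto
  have "\<exists>w. (\<Sum>i\<in>UNIV. w $ i *s \<beta> i) = y" for y :: "complex^'n"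
  proof -
    obtain u where "y = (\<Sum>v\<in>B. u v *s v)"
      using span_B vec.span_finite[OF \<open>finite B\<close>] by auto
    also have "\<dots> = (\<Sum>i\<in>UNIV. u (\<beta> i) *s \<beta> i)"
      using sum.reindex_bij_betw[OF \<beta>, of "\<lambda>v. u v *s v"] by simp
    finally have "(\<Sum>i\<in>UNIV. (\<chi> i. u (\<beta> i)) $ i *s \<beta> i) = y" by simp
    then show ?thesis by blast
  qed
  then have "surj (\<lambda>w. \<Sum>i\<in>UNIV. w $ i *s \<beta> i)" unfolding surj_def by metis
  moreover have "\<beta> i \<in> common_eigenvectors \<A>" for i using \<beta> B(1) by (auto simp: bij_betw_def)
  ultimately show ?thesis using that by blast
qed

section \<open>Unitary representations of the circle group\<close>

lemma circle_group_mult: "g \<in> circle_group \<Longrightarrow> h \<in> circle_group \<Longrightarrow> g * h \<in> circle_group"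
  by (simp add: circle_group_def norm_mult)

lemma circle_group_mult_cnj: "g \<in> circle_group \<Longrightarrow> g * cnj g = 1"
  using complex_norm_square[of g] by (simp add: circle_group_def)

lemma unitary_rep_one:
  assumes "unitary_rep \<rho>"
  shows "\<rho> 1 = mat 1"
proof -
  have one: "1 \<in> circle_group" by (simp add: circle_group_def)
  have idem: "\<rho> 1 = \<rho> 1 ** \<rho> 1" and inv: "conj_transpose (\<rho> 1) ** \<rho> 1 = mat 1"
    using assms one by (auto simp: unitary_rep_def unitary_def dest: bspec[of _ _ 1])
  have "\<rho> 1 = (conj_transpose (\<rho> 1) ** \<rho> 1) ** \<rho> 1" by (simp add: inv)
  also have "\<dots> = conj_transpose (\<rho> 1) ** (\<rho> 1 ** \<rho> 1)" by (simp add: matrix_mul_assoc)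
  also have "\<dots> = conj_transpose (\<rho> 1) ** \<rho> 1" by (simp only: idem[symmetric])
  finally show ?thesis by (simp add: inv)
qed

lemma unitary_rep_conj_transpose:
  assumes rep: "unitary_rep \<rho>" and g: "g \<in> circle_group"
  shows "conj_transpose (\<rho> g) = \<rho> (cnj g)"
proof -
  have cnj_g: "cnj g \<in> circle_group" using g by (simp add: circle_group_def)
  have inv: "conj_transpose (\<rho> g) ** \<rho> g = mat 1"
    using rep g by (simp add: unitary_rep_def unitary_def)
  have "conj_transpose (\<rho> g) = conj_transpose (\<rho> g) ** \<rho> (g * cnj g)"
    using g unitary_rep_one[OF rep] by (simp add: circle_group_mult_cnj)
  also have "\<dots> = (conj_transpose (\<rho> g) ** \<rho> g) ** \<rho> (cnj g)"
    using rep g cnj_g by (simp add: unitary_rep_def matrix_mul_assoc)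
  finally show ?thesis by (simp add: inv)
qed

lemma unitary_rep_eigenvector_circle_char:
  assumes rep: "unitary_rep \<rho>" and \<beta>: "\<beta> \<in> common_eigenvectors (\<rho> ` circle_group)"
  shows "\<exists>k. \<forall>g\<in>circle_group. \<rho> g *v \<beta> = circle_char k g *s \<beta>"
proof -
  have cont: "continuous_on circle_group \<rho>"
    and hom: "\<And>g h. g \<in> circle_group \<Longrightarrow> h \<in> circle_group \<Longrightarrow> \<rho> (g * h) = \<rho> g ** \<rho> h"
    and unit: "\<And>g. g \<in> circle_group \<Longrightarrow> unitary (\<rho> g)"
    using rep by (auto simp: unitary_rep_def)
  have "\<beta> \<noteq> 0" using \<beta> by (simp add: common_eigenvectors_def)
  then obtain j where j: "\<beta> $ j \<noteq> 0" by (auto simp: vec_eq_iff)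
  define ev where "ev g = (\<rho> g *v \<beta>) $ j / \<beta> $ j" for g
  have eig: "\<rho> g *v \<beta> = ev g *s \<beta>" if g: "g \<in> circle_group" for g
  proof -
    obtain c where "\<rho> g *v \<beta> = c *s \<beta>" using \<beta> g by (auto simp: common_eigenvectors_def)
    with j show ?thesis by (simp add: ev_def)
  qed
  have "continuous_on circle_group (\<lambda>g. (\<Sum>k\<in>UNIV. \<rho> g $ j $ k * \<beta> $ k) / \<beta> $ j)"
    by (intro continuous_intros cont) (simp add: j)
  then have "continuous_on circle_group ev"
    by (simp add: ev_def matrix_vector_mult_def)
  moreover have "ev (g * h) = ev g * ev h"
    if g: "g \<in> circle_group" and h: "h \<in> circle_group" for g h
  proof -
    have "ev (g * h) *s \<beta> = \<rho> g *v (\<rho> h *v \<beta>)"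
      using eig[OF circle_group_mult[OF g h]] hom[OF g h] by (simp add: matrix_vector_mul_assoc)
    also have "\<dots> = (ev g * ev h) *s \<beta>"
      using eig[OF g] eig[OF h] by (simp add: vec.scale vector_smult_assoc mult.commute)
    finally have "(ev (g * h) *s \<beta>) $ j = ((ev g * ev h) *s \<beta>) $ j" by (rule arg_cong)
    with j show ?thesis by simp
  qed
  moreover have "ev g \<noteq> 0" if g: "g \<in> circle_group" for g
  proof
    assume "ev g = 0"
    then have "conj_transpose (\<rho> g) *v (\<rho> g *v \<beta>) = 0" using eig[OF g] by simp
    then have "\<beta> = 0" using unit[OF g] by (simp add: unitary_def matrix_vector_mul_assoc)
    with j show False by simp
  qed
  ultimately obtain k where "\<forall>g\<in>circle_group. ev g = circle_char k g"
    using continuous_circle_hom_eq_circle_char by blast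
  with eig show ?thesis by auto
qed

lemma coordinate_map_exists:
  fixes \<beta> :: "'n \<Rightarrow> complex^'n"
  assumes "surj (\<lambda>w. \<Sum>i\<in>UNIV. w $ i *s \<beta> i)"
  obtains Q :: "complex^'n \<Rightarrow> complex^'n"
  where "linear Q" "bij Q" "\<And>w. Q (\<Sum>i\<in>UNIV. w $ i *s \<beta> i) = w" "\<And>u. (\<Sum>i\<in>UNIV. Q u $ i *s \<beta> i) = u"
proof -
  define M :: "complex^'n^'n" where "M = (\<chi> r c. \<beta> c $ r)"
  have M: "M *v w = (\<Sum>i\<in>UNIV. w $ i *s \<beta> i)" for w
    by (simp add: vec_eq_iff M_def matrix_vector_mult_def sum_component mult.commute)
  then have "(*v) M = (\<lambda>w. \<Sum>i\<in>UNIV. w $ i *s \<beta> i)" by (intro ext)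
  with assms have "surj ((*v) M)" by simp
  then obtain Q where Q: "Vector_Spaces.linear (*s) (*s) Q" "\<And>x. Q (M *v x) = x" "\<And>x. M *v Q x = x"
    using vec.linear_surjective_isomorphism[OF matrix_vector_mul_linear_gen] by blast
  have "Q = (*v) (matrix Q)" by (rule ext) (simp add: matrix_works[OF Q(1)])
  then have "linear Q" by (metis matrix_vector_mul_linear)
  moreover have "bij Q" by (metis Q(2,3) bij_def injI surjI)
  ultimately show ?thesis using that Q(2,3) by (simp add: M)
qed

lemma unitary_rep_image_commute:
  assumes rep: "unitary_rep \<rho>" and "A \<in> \<rho> ` circle_group" "B \<in> \<rho> ` circle_group"
  shows "A ** B = B ** A"
proof -
  obtain g h where gh: "g \<in> circle_group" "h \<in> circle_group" "A = \<rho> g" "B = \<rho> h"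
    using assms(2,3) by blast
  then have "A ** B = \<rho> (h * g)" using rep by (simp add: unitary_rep_def mult.commute)
  also have "\<dots> = B ** A" using rep gh by (simp add: unitary_rep_def)
  finally show ?thesis .
qed

lemma unitary_rep_diagonalisation:
  fixes \<rho> :: "complex \<Rightarrow> complex^'n^'n"
  assumes rep: "unitary_rep \<rho>"
  obtains Q :: "complex^'n \<Rightarrow> complex^'n" and k :: "'n \<Rightarrow> int"
  where "linear Q" "bij Q"
    "\<And>g u. g \<in> circle_group \<Longrightarrow> Q (\<rho> g *v u) = (\<chi> i. circle_char (k i) g * Q u $ i)"
proof -
  have "conj_transpose A \<in> \<rho> ` circle_group" if "A \<in> \<rho> ` circle_group" for A
    using that unitary_rep_conj_transpose[OF rep] by (auto simp: circle_group_def)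
  then obtain \<beta> :: "'n \<Rightarrow> complex^'n" where \<beta>: "\<And>i. \<beta> i \<in> common_eigenvectors (\<rho> ` circle_group)"
    and surj_\<beta>: "surj (\<lambda>w. \<Sum>i\<in>UNIV. w $ i *s \<beta> i)"
    using common_eigenbasis unitary_rep_image_commute[OF rep] by blast
  have "\<forall>i. \<exists>k. \<forall>g\<in>circle_group. \<rho> g *v \<beta> i = circle_char k g *s \<beta> i"
    using unitary_rep_eigenvector_circle_char[OF rep \<beta>] by blast
  from choice[OF this] obtain k
    where k: "\<And>i g. g \<in> circle_group \<Longrightarrow> \<rho> g *v \<beta> i = circle_char (k i) g *s \<beta> i"
    by blast
  obtain Q where Q: "linear Q" "bij Q" "\<And>w. Q (\<Sum>i\<in>UNIV. w $ i *s \<beta> i) = w"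
    and Q_coord: "\<And>u. (\<Sum>i\<in>UNIV. Q u $ i *s \<beta> i) = u"
    using coordinate_map_exists[OF surj_\<beta>] by blast
  have "Q (\<rho> g *v u) = (\<chi> i. circle_char (k i) g * Q u $ i)" if g: "g \<in> circle_group" for g u
  proof -
    have "\<rho> g *v u = \<rho> g *v (\<Sum>i\<in>UNIV. Q u $ i *s \<beta> i)" by (simp add: Q_coord)
    also have "\<dots> = (\<Sum>i\<in>UNIV. (\<chi> i. circle_char (k i) g * Q u $ i) $ i *s \<beta> i)"
      using k[OF g] by (simp add: vec.sum vec.scale vector_smult_assoc mult.commute)
    finally show ?thesis by (simp only: Q(3))
  qed
  with Q(1,2) show ?thesis using that by blast
qed

section \<open>Polynomial maps are smooth\<close>

lemma real_polynomial_function_frechet_derivative: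
  assumes "real_polynomial_function f"
  shows "real_polynomial_function (\<lambda>x. frechet_derivative f (at x) v)"
  using assms
proof (induction f rule: real_polynomial_function.induct)
  case (linear f)
  then have "frechet_derivative f (at x) = f" for x
    by (intro frechet_derivative_at[symmetric] bounded_linear_imp_has_derivative)
  then show ?case by (simp add: real_polynomial_function_eq)
next
  case (const c)
  have "frechet_derivative (\<lambda>x. c) (at x) = (\<lambda>v. 0)" for x :: 'a
    by (intro frechet_derivative_at[symmetric] has_derivative_const)
  then show ?case by (simp add: real_polynomial_function_eq)
next
  case (add f g)
  have "(f has_derivative frechet_derivative f (at x)) (at x)"
    "(g has_derivative frechet_derivative g (at x)) (at x)" for x
    using add.hyps
    by (simp_all add: frechet_derivative_works[symmetric] differentiable_at_real_polynomial_function)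
  then have "frechet_derivative (\<lambda>x. f x + g x) (at x) =
      (\<lambda>v. frechet_derivative f (at x) v + frechet_derivative g (at x) v)" for x
    by (intro frechet_derivative_at[symmetric] has_derivative_add)
  then show ?case using add.IH by (simp add: real_polynomial_function.intros(3))
next
  case (mult f g)
  have "(f has_derivative frechet_derivative f (at x)) (at x)"
    "(g has_derivative frechet_derivative g (at x)) (at x)" for x
    using mult.hyps
    by (simp_all add: frechet_derivative_works[symmetric] differentiable_at_real_polynomial_function)
  then have "frechet_derivative (\<lambda>x. f x * g x) (at x) =
      (\<lambda>v. f x * frechet_derivative g (at x) v + frechet_derivative f (at x) v * g x)" for x
    by (intro frechet_derivative_at[symmetric] has_derivative_mult)
  then show ?case
    using mult.IH mult.hyps by (simp add: real_polynomial_function.intros(3,4))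
qed

lemma polynomial_function_frechet_derivative:
  fixes f :: "'a::real_normed_vector \<Rightarrow> 'b::euclidean_space"
  assumes "polynomial_function f"
  shows "polynomial_function (\<lambda>x. frechet_derivative f (at x) v)"
proof -
  have "frechet_derivative f (at x) v \<bullet> b = frechet_derivative (\<lambda>x. f x \<bullet> b) (at x) v" for x b
  proof -
    have "(f has_derivative frechet_derivative f (at x)) (at x)"
      using assms differentiable_at_polynomial_function frechet_derivative_works by blast
    then have "((\<lambda>x. f x \<bullet> b) has_derivative (\<lambda>v. frechet_derivative f (at x) v \<bullet> b)) (at x)"
      by (rule has_derivative_inner_left)
    then have "frechet_derivative (\<lambda>x. f x \<bullet> b) (at x) = (\<lambda>v. frechet_derivative f (at x) v \<bullet> b)"
      by (rule frechet_derivative_at[symmetric])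
    then show ?thesis by simp
  qed
  then show ?thesis
    using assms by (simp add: polynomial_function_iff_Basis_inner real_polynomial_function_frechet_derivative)
qed

lemma smooth_on_polynomial_function:
  fixes f :: "'a::euclidean_space \<Rightarrow> 'b::euclidean_space"
  assumes "polynomial_function f"
  shows "smooth_on UNIV f"
  unfolding smooth_on_def
  using assms differentiable_at_polynomial_function polynomial_function_frechet_derivative
  by (intro conjI exI[of _ "Collect polynomial_function"]) auto

lemma polynomial_function_complex_iff:
  "polynomial_function f \<longleftrightarrow>
    real_polynomial_function (\<lambda>x. Re (f x)) \<and> real_polynomial_function (\<lambda>x. Im (f x))"
  by (simp add: polynomial_function_iff_Basis_inner Basis_complex_def inner_complex_def)

lemma polynomial_function_complex_mult:
  fixes f g :: "'a::real_normed_vector \<Rightarrow> complex"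
  assumes "polynomial_function f" "polynomial_function g"
  shows "polynomial_function (\<lambda>x. f x * g x)"
  using assms unfolding polynomial_function_complex_iff
  by (simp add: real_polynomial_function_diff real_polynomial_function.intros(3,4))

lemma polynomial_function_complex_power:
  fixes f :: "'a::real_normed_vector \<Rightarrow> complex"
  shows "polynomial_function f \<Longrightarrow> polynomial_function (\<lambda>x. f x ^ n)"
  by (induction n) (simp_all add: polynomial_function_complex_mult)

lemma polynomial_function_circle_char:
  fixes f :: "'a::real_normed_vector \<Rightarrow> complex"
  assumes "polynomial_function f"
  shows "polynomial_function (\<lambda>x. circle_char k (f x))"
proof -
  have "polynomial_function (\<lambda>x. cnj (f x))"
    using polynomial_function_compose[OF assms polynomial_function_bounded_linear[OF bounded_linear_cnj]]
    by (simp add: o_def)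
  then show ?thesis
    using assms by (cases "0 \<le> k") (simp_all add: circle_char_def polynomial_function_complex_power)
qed

lemma polynomial_function_vec_lambda:
  fixes f :: "'i::finite \<Rightarrow> 'a::real_normed_vector \<Rightarrow> 'b::euclidean_space"
  assumes "\<And>i. polynomial_function (f i)"
  shows "polynomial_function (\<lambda>x. \<chi> i. f i x)"
proof -
  have "real_polynomial_function (\<lambda>x. (\<chi> i. f i x) \<bullet> axis i b)" if "b \<in> Basis" for i b
    using assms[of i] that by (simp add: inner_axis polynomial_function_iff_Basis_inner)
  then show ?thesis
    by (auto simp: polynomial_function_iff_Basis_inner Basis_vec_def)
qed

section \<open>The rotation action on a product of spheres\<close>

definition rotate_z :: "complex \<Rightarrow> real^3 \<Rightarrow> real^3" where
  "rotate_z c v = vector [Re c * v$1 - Im c * v$2, Im c * v$1 + Re c * v$2, v$3]"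

lemma rotate_z_nth [simp]:
  "rotate_z c v $ 1 = Re c * v$1 - Im c * v$2"
  "rotate_z c v $ 2 = Im c * v$1 + Re c * v$2"
  "rotate_z c v $ 3 = v$3"
  by (simp_all add: rotate_z_def)

lemma vec3_eq_iff: "(u::real^3) = v \<longleftrightarrow> u$1 = v$1 \<and> u$2 = v$2 \<and> u$3 = v$3"
  by (simp add: vec_eq_iff forall_3)

lemma inner_vec3: "(u::real^3) \<bullet> v = u$1 * v$1 + u$2 * v$2 + u$3 * v$3"
  by (simp add: inner_vec_def sum_3)

lemma rotate_z_one: "rotate_z 1 v = v"
  by (simp add: vec3_eq_iff)

lemma rotate_z_mult: "rotate_z (c * d) v = rotate_z c (rotate_z d v)"
  by (simp add: vec3_eq_iff algebra_simps)

lemma norm_rotate_z: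
  assumes "norm c = 1"
  shows "norm (rotate_z c v) = norm v"
proof -
  have c: "Re c ^ 2 + Im c ^ 2 = 1" using assms by (simp add: cmod_def)
  have "rotate_z c v \<bullet> rotate_z c v = (Re c ^ 2 + Im c ^ 2) * (v$1^2 + v$2^2) + v$3^2"
    by (simp add: inner_vec3 power2_eq_square algebra_simps)
  also have "\<dots> = v \<bullet> v" using c by (simp add: inner_vec3 power2_eq_square)
  finally show ?thesis by (simp add: norm_eq_sqrt_inner)
qed

lemma linear_rotate_z: "linear (rotate_z c)"
  by (rule linearI) (simp_all add: vec3_eq_iff algebra_simps)

lemma rotate_z_fixed_point_eq_1:
  assumes "rotate_z c y = y" "y$1 \<noteq> 0 \<or> y$2 \<noteq> 0"
  shows "c = 1"
proof -
  define z where "z = Complex (y$1) (y$2)"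
  have "z \<noteq> 0" using assms(2) by (simp add: z_def complex_eq_iff)
  moreover have "(c - 1) * z = 0"
    using assms(1) by (simp add: z_def complex_eq_iff vec3_eq_iff algebra_simps)
  ultimately show ?thesis by simp
qed

lemma polynomial_function_rotate_z:
  fixes c :: "'a::real_normed_vector \<Rightarrow> complex"
  assumes c: "polynomial_function c" and v: "polynomial_function v"
  shows "polynomial_function (\<lambda>x. rotate_z (c x) (v x))"
proof -
  have v_nth: "real_polynomial_function (\<lambda>x. v x $ m)" for m
    using v by (simp add: polynomial_function_iff_Basis_inner Basis_vec_def cart_eq_inner_axis)
  have "real_polynomial_function (\<lambda>x. rotate_z (c x) (v x) $ j)" for j
    using c v_nth exhaust_3[of j] unfolding polynomial_function_complex_iff
    by (auto simp: real_polynomial_function_diff real_polynomial_function.intros(3,4))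
  then show ?thesis
    by (auto simp: polynomial_function_iff_Basis_inner Basis_vec_def cart_eq_inner_axis)
qed

definition sphere_rotation :: "('n \<Rightarrow> int) \<Rightarrow> complex \<Rightarrow> real^3^'n \<Rightarrow> real^3^'n" where
  "sphere_rotation k g x = (\<chi> i. rotate_z (circle_char (k i) g) (x$i))"

lemma sphere_rotation_nth [simp]: "sphere_rotation k g x $ i = rotate_z (circle_char (k i) g) (x$i)"
  by (simp add: sphere_rotation_def)

lemma linear_sphere_rotation: "linear (sphere_rotation k g)"
  by (rule linearI)
    (simp_all add: vec_eq_iff linear_add[OF linear_rotate_z] linear_scale[OF linear_rotate_z])

lemma smooth_circle_action_sphere_rotation:
  fixes k :: "'n::finite \<Rightarrow> int"
  shows "smooth_circle_action (sphere_rotation k) sphere_product"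
  unfolding smooth_circle_action_def
proof (intro conjI ballI)
  fix g and x :: "real^3^'n" assume "g \<in> circle_group" "x \<in> sphere_product"
  then show "sphere_rotation k g x \<in> sphere_product"
    by (simp add: sphere_product_def circle_group_def norm_rotate_z norm_circle_char)
next
  fix g h and x :: "real^3^'n"
  show "sphere_rotation k 1 x = x" by (simp add: vec_eq_iff rotate_z_one)
  show "sphere_rotation k (g * h) x = sphere_rotation k g (sphere_rotation k h x)"
    by (simp add: vec_eq_iff circle_char_mult rotate_z_mult)
next
  have "polynomial_function (\<lambda>p. sphere_rotation k (fst p) (snd p))"
    unfolding sphere_rotation_def
  proof (rule polynomial_function_vec_lambda)
    fix i
    have "polynomial_function (\<lambda>p. circle_char (k i) (fst p))"
      by (intro polynomial_function_circle_char polynomial_function_bounded_linear bounded_linear_fst)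
    moreover have "polynomial_function (\<lambda>p. snd p $ i)"
      by (intro polynomial_function_bounded_linear bounded_linear_compose[OF bounded_linear_vec_nth]
          bounded_linear_snd)
    ultimately show "polynomial_function (\<lambda>p. rotate_z (circle_char (k i) (fst p)) (snd p $ i))"
      by (rule polynomial_function_rotate_z)
  qed
  then show "\<exists>U F. circle_group \<times> (sphere_product :: (real^3^'n) set) \<subseteq> U \<and> smooth_on U F \<and>
      (\<forall>g\<in>circle_group. \<forall>x\<in>sphere_product. F (g, x) = sphere_rotation k g x)"
    by (intro exI[of _ UNIV] exI[of _ "\<lambda>p. sphere_rotation k (fst p) (snd p)"])
      (simp add: smooth_on_polynomial_function)
qed

section \<open>Tangent spaces of a product of spheres\<close>

lemma curve_through_sphere_product_orthogonal:
  assumes x: "x \<in> sphere_product" and c: "curve_through sphere_product x \<gamma> v"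
  shows "v$i \<bullet> x$i = 0"
proof -
  obtain e where e: "e > 0" "\<And>t. \<bar>t\<bar> < e \<Longrightarrow> \<gamma> t \<in> sphere_product"
    and g0: "\<gamma> 0 = x" and gd: "(\<gamma> has_vector_derivative v) (at 0)"
    using c by (auto simp: curve_through_def)
  have gd': "(\<gamma> has_derivative (\<lambda>h. h *\<^sub>R v)) (at 0)"
    using gd by (simp add: has_vector_derivative_def)
  have g1: "((\<lambda>t. \<gamma> t $ i) has_derivative (\<lambda>h. h *\<^sub>R v$i)) (at 0)"
    using bounded_linear.has_derivative[OF bounded_linear_vec_nth gd', of i] by simp
  have q1: "((\<lambda>t. \<gamma> t $ i \<bullet> \<gamma> t $ i) has_derivative
             (\<lambda>h. \<gamma> 0 $ i \<bullet> (h *\<^sub>R v$i) + (h *\<^sub>R v$i) \<bullet> \<gamma> 0 $ i)) (at 0)"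
    by (rule has_derivative_inner[OF g1 g1])
  have q2: "((\<lambda>t. \<gamma> t $ i \<bullet> \<gamma> t $ i) has_derivative (\<lambda>h. 0)) (at 0)"
  proof (rule has_derivative_transform_within_open[OF has_derivative_const[of 1] open_ball])
    show "0 \<in> ball (0::real) e" using e by simp
    fix t :: real assume "t \<in> ball 0 e"
    then have "\<gamma> t \<in> sphere_product" using e by (auto simp: dist_norm)
    then have "norm (\<gamma> t $ i) = 1" by (simp add: sphere_product_def)
    then show "1 = \<gamma> t $ i \<bullet> \<gamma> t $ i" by (simp add: norm_eq_1)
  qed
  have eqf: "(\<lambda>h. \<gamma> 0 $ i \<bullet> (h *\<^sub>R v$i) + (h *\<^sub>R v$i) \<bullet> \<gamma> 0 $ i) = (\<lambda>h::real. 0)"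
    by (rule has_derivative_unique[OF q1 q2])
  have "\<gamma> 0 $ i \<bullet> v$i + v$i \<bullet> \<gamma> 0 $ i = 0" using fun_cong[OF eqf, of 1] by simp
  then show ?thesis using g0 by (simp add: inner_commute)
qed

lemma has_vector_derivative_vec_lambda:
  fixes f :: "'i::finite \<Rightarrow> real \<Rightarrow> 'a::euclidean_space"
  assumes "\<And>i. (f i has_vector_derivative f' i) (at t)"
  shows "((\<lambda>s. \<chi> i. f i s) has_vector_derivative (\<chi> i. f' i)) (at t)"
  unfolding has_vector_derivative_def
proof (subst has_derivative_componentwise_within, intro ballI)
  fix b :: "'a^'i" assume "b \<in> Basis"
  then obtain i u where b: "b = axis i u" by (auto simp: Basis_vec_def)
  have "(f i has_derivative (\<lambda>h. h *\<^sub>R f' i)) (at t)"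
    using assms[of i] by (simp add: has_vector_derivative_def)
  then have "((\<lambda>s. f i s \<bullet> u) has_derivative (\<lambda>h. (h *\<^sub>R f' i) \<bullet> u)) (at t)"
    by (rule has_derivative_inner_left)
  then show "((\<lambda>s. (\<chi> i. f i s) \<bullet> b) has_derivative (\<lambda>h. (h *\<^sub>R (\<chi> i. f' i)) \<bullet> b)) (at t)"
    by (simp add: b inner_axis)
qed

lemma unit_sphere_curve:
  fixes y w :: "'a::real_inner"
  assumes y: "norm y = 1" and w: "w \<bullet> y = 0"
  defines "\<gamma> \<equiv> \<lambda>t. inverse (sqrt (1 + t^2 * (w \<bullet> w))) *\<^sub>R (y + t *\<^sub>R w)"
  shows "norm (\<gamma> t) = 1" "\<gamma> 0 = y" "(\<gamma> has_vector_derivative w) (at 0)"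
proof -
  have pos: "0 < 1 + t^2 * (w \<bullet> w)" by (simp add: add_pos_nonneg)
  have "(y + t *\<^sub>R w) \<bullet> (y + t *\<^sub>R w) = 1 + t^2 * (w \<bullet> w)"
    using w y by (simp add: inner_add_left inner_add_right inner_commute power2_eq_square norm_eq_1)
  then have "norm (y + t *\<^sub>R w) = sqrt (1 + t^2 * (w \<bullet> w))" by (simp add: norm_eq_sqrt_inner)
  then show "norm (\<gamma> t) = 1" using pos by (simp add: \<gamma>_def)
  show "\<gamma> 0 = y" by (simp add: \<gamma>_def)
  have "((\<lambda>t. 1 + t^2 * (w \<bullet> w)) has_real_derivative 0) (at 0)"
    using Deriv.field_differentiable_add[OF DERIV_const[of 1]
        DERIV_cmult_right[OF DERIV_pow[of 2 0 UNIV], of "w \<bullet> w"]]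
    by simp
  from DERIV_inverse'[OF DERIV_chain2[OF DERIV_real_sqrt this]]
  have "((\<lambda>t. inverse (sqrt (1 + t^2 * (w \<bullet> w)))) has_real_derivative 0) (at 0)" by simp
  moreover have "((\<lambda>t. y + t *\<^sub>R w) has_vector_derivative w) (at 0)"
    unfolding has_vector_derivative_def by (auto intro!: derivative_eq_intros)
  ultimately show "(\<gamma> has_vector_derivative w) (at 0)"
    using has_vector_derivative_scaleR by (fastforce simp: \<gamma>_def)
qed

lemma curve_through_sphere_product_exists:
  assumes x: "x \<in> sphere_product" and v: "\<And>i. v$i \<bullet> x$i = 0"
  shows "\<exists>\<gamma>. curve_through sphere_product x \<gamma> v"
proof -
  define \<gamma> where "\<gamma> t = (\<chi> i. inverse (sqrt (1 + t^2 * (v$i \<bullet> v$i))) *\<^sub>R (x$i + t *\<^sub>R v$i))" for t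
  have x_nth: "norm (x$i) = 1" for i using x by (simp add: sphere_product_def)
  have "\<gamma> t \<in> sphere_product" for t
    using unit_sphere_curve(1)[OF x_nth v] by (simp add: \<gamma>_def sphere_product_def)
  moreover have "\<gamma> 0 = x" by (simp add: \<gamma>_def vec_eq_iff)
  moreover have "((\<lambda>t. inverse (sqrt (1 + t^2 * (v$i \<bullet> v$i))) *\<^sub>R (x$i + t *\<^sub>R v$i))
      has_vector_derivative v$i) (at 0)" for i
    by (rule unit_sphere_curve(3)[OF x_nth v])
  then have "(\<gamma> has_vector_derivative (\<chi> i. v$i)) (at 0)"
    unfolding \<gamma>_def[abs_def] by (rule has_vector_derivative_vec_lambda)
  ultimately show ?thesis unfolding curve_through_def vec_lambda_eta by (blast intro: zero_less_one)
qed

lemma tangent_space_sphere_product: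
  assumes x: "x \<in> sphere_product"
  shows "tangent_space sphere_product x = {v. \<forall>i. v$i \<bullet> x$i = 0}"
proof (intro set_eqI iffI)
  fix v assume "v \<in> tangent_space sphere_product x"
  then obtain \<gamma> where "curve_through sphere_product x \<gamma> v" by (auto simp: tangent_space_def)
  then show "v \<in> {v. \<forall>i. v$i \<bullet> x$i = 0}"
    using curve_through_sphere_product_orthogonal[OF x] by blast
next
  fix v :: "real^3^'a" assume "v \<in> {v. \<forall>i. v$i \<bullet> x$i = 0}"
  then have "\<And>i. v$i \<bullet> x$i = 0" by simp
  then obtain \<gamma> where "curve_through sphere_product x \<gamma> v"
    using curve_through_sphere_product_exists[OF x] by blast
  then show "v \<in> tangent_space sphere_product x" by (auto simp: tangent_space_def)
qed

section \<open>Isotropy representations of the rotation action\<close>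

lemma orthogonal_plane_param:
  fixes y :: "real^3"
  assumes "y \<noteq> 0"
  obtains f :: "complex \<Rightarrow> real^3" where "linear f" "inj f" "range f = {w. w \<bullet> y = 0}"
proof -
  have "dim {w. y \<bullet> w = 0} = dim (UNIV :: complex set)"
    using dim_hyperplane[OF assms] by simp
  then obtain f :: "complex \<Rightarrow> real^3" where "linear f" "range f = {w. y \<bullet> w = 0}" "inj f"
    using subspace_isomorphism[OF subspace_UNIV subspace_hyperplane] by metis
  then show ?thesis using that by (simp add: inner_commute)
qed

lemma vertical_orthogonal_plane_param:
  fixes y :: "real^3"
  assumes "y \<noteq> 0" "y$1 = 0" "y$2 = 0"
  defines "f \<equiv> \<lambda>z. vector [Re z, Im z, 0] :: real^3"
  shows "linear f" "inj f" "range f = {w. w \<bullet> y = 0}" "rotate_z c (f z) = f (c * z)"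
proof -
  have f_nth [simp]: "f z $ 1 = Re z" "f z $ 2 = Im z" "f z $ 3 = 0" for z by (simp_all add: f_def)
  have "y$3 \<noteq> 0" using assms(1-3) by (simp add: vec3_eq_iff)
  have "w \<in> range f" if "w \<bullet> y = 0" for w
  proof -
    have "w$3 = 0" using that assms(2,3) \<open>y$3 \<noteq> 0\<close> by (simp add: inner_vec3)
    then have "w = f (Complex (w$1) (w$2))" by (simp add: vec3_eq_iff)
    then show ?thesis by blast
  qed
  then show "range f = {w. w \<bullet> y = 0}" using assms(2,3) by (auto simp: inner_vec3)
  show "linear f" by (rule linearI) (simp_all add: vec3_eq_iff)
  show "inj f" by (rule injI) (simp add: vec3_eq_iff complex_eq_iff)
  show "rotate_z c (f z) = f (c * z)" by (simp add: vec3_eq_iff)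
qed

lemma tangent_plane_param:
  fixes y :: "real^3"
  assumes "y \<noteq> 0"
  shows "\<exists>f :: complex \<Rightarrow> real^3. linear f \<and> inj f \<and> range f = {w. w \<bullet> y = 0} \<and>
    (y$1 = 0 \<and> y$2 = 0 \<longrightarrow> (\<forall>c z. rotate_z c (f z) = f (c * z)))"
proof (cases "y$1 = 0 \<and> y$2 = 0")
  case True
  then show ?thesis using vertical_orthogonal_plane_param[OF assms] by blast
next
  case False
  then show ?thesis using orthogonal_plane_param[OF assms] by metis
qed

lemma isotropy_rep_iso_linear_action:
  fixes a :: "complex \<Rightarrow> 'a::euclidean_space \<Rightarrow> 'a" and \<phi> :: "complex^'n \<Rightarrow> 'a"
  assumes "linear \<phi>" "inj \<phi>" "range \<phi> = tangent_space X x"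
    and lin: "\<And>g. g \<in> isotropy a x \<Longrightarrow> linear (a g)"
    and equiv: "\<And>g u. g \<in> isotropy a x \<Longrightarrow> a g (\<phi> u) = \<phi> (\<rho> g *v u)"
  shows "isotropy_rep_iso a X \<rho> x"
  unfolding isotropy_rep_iso_def
proof (intro exI[of _ \<phi>] conjI assms(1-3) allI ballI impI)
  fix g u \<gamma> assume g: "g \<in> isotropy a x" and "curve_through X x \<gamma> (\<phi> u)"
  then have "(\<gamma> has_derivative (\<lambda>t. t *\<^sub>R \<phi> u)) (at 0)"
    by (simp add: curve_through_def has_vector_derivative_def)
  moreover have "bounded_linear (a g)" using lin[OF g] by (simp add: linear_conv_bounded_linear)
  ultimately have "((\<lambda>t. a g (\<gamma> t)) has_derivative (\<lambda>t. a g (t *\<^sub>R \<phi> u))) (at 0)"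
    using bounded_linear.has_derivative by blast
  then show "((\<lambda>t. a g (\<gamma> t)) has_vector_derivative \<phi> (\<rho> g *v u)) (at 0)"
    by (simp add: has_vector_derivative_def linear_scale[OF lin[OF g]] equiv[OF g])
qed

lemma vec_lambda_compose_linear_bij:
  fixes Q :: "'a::real_vector \<Rightarrow> complex^'n" and \<iota> :: "'n \<Rightarrow> complex \<Rightarrow> 'b::real_vector"
  assumes Q: "linear Q" "bij Q" and \<iota>: "\<And>i. linear (\<iota> i)" "\<And>i. inj (\<iota> i)"
  defines "\<phi> \<equiv> \<lambda>u. \<chi> i. \<iota> i (Q u $ i)"
  shows "linear \<phi>" "inj \<phi>" "range \<phi> = {v. \<forall>i. v $ i \<in> range (\<iota> i)}"
proof -
  show "linear \<phi>"
    by (rule linearI)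
      (simp_all add: \<phi>_def vec_eq_iff linear_add[OF Q(1)] linear_scale[OF Q(1)]
        linear_add[OF \<iota>(1)] linear_scale[OF \<iota>(1)])
  show "inj \<phi>"
  proof (rule injI)
    fix u v assume "\<phi> u = \<phi> v"
    then have "Q u $ i = Q v $ i" for i using \<iota>(2) by (simp add: \<phi>_def vec_eq_iff inj_eq)
    then have "Q u = Q v" by (simp add: vec_eq_iff)
    then show "u = v" using Q(2) by (simp add: bij_def inj_eq)
  qed
  show "range \<phi> = {v. \<forall>i. v $ i \<in> range (\<iota> i)}"
  proof (intro set_eqI iffI)
    fix v assume "v \<in> {v. \<forall>i. v $ i \<in> range (\<iota> i)}"
    then have "\<forall>i. \<exists>z. v $ i = \<iota> i z" by auto
    from choice[OF this] obtain z where z: "\<And>i. v $ i = \<iota> i (z i)" by blast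
    have "(\<chi> i. z i) \<in> range Q" using Q(2) by (simp add: bij_def)
    then obtain u where "Q u = (\<chi> i. z i)" by (metis rangeE)
    then have "\<phi> u = v" by (simp add: \<phi>_def vec_eq_iff z)
    then show "v \<in> range \<phi>" by blast
  qed (auto simp: \<phi>_def)
qed

lemma sphere_product_tangent_params:
  fixes x :: "real^3^'n"
  assumes x: "x \<in> sphere_product"
  obtains \<iota> :: "'n \<Rightarrow> complex \<Rightarrow> real^3"
  where "\<And>i. linear (\<iota> i)" "\<And>i. inj (\<iota> i)" "\<And>i. range (\<iota> i) = {w. w \<bullet> x$i = 0}"
    "\<And>i c z. x$i$1 = 0 \<Longrightarrow> x$i$2 = 0 \<Longrightarrow> rotate_z c (\<iota> i z) = \<iota> i (c * z)"
proof -
  have "x$i \<noteq> 0" for i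
  proof -
    have "norm (x$i) = 1" using x by (simp add: sphere_product_def)
    then show ?thesis by auto
  qed
  then have "\<forall>i. \<exists>f :: complex \<Rightarrow> real^3. linear f \<and> inj f \<and> range f = {w. w \<bullet> x$i = 0} \<and>
      (x$i$1 = 0 \<and> x$i$2 = 0 \<longrightarrow> (\<forall>c z. rotate_z c (f z) = f (c * z)))"
    using tangent_plane_param by blast
  from choice[OF this] obtain \<iota> :: "'n \<Rightarrow> complex \<Rightarrow> real^3"
    where "\<forall>i. linear (\<iota> i) \<and> inj (\<iota> i) \<and> range (\<iota> i) = {w. w \<bullet> x$i = 0} \<and>
      (x$i$1 = 0 \<and> x$i$2 = 0 \<longrightarrow> (\<forall>c z. rotate_z c (\<iota> i z) = \<iota> i (c * z)))"
    by blast
  then show ?thesis using that by blast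
qed

lemma isotropy_sphere_rotation_off_axis:
  assumes "g \<in> isotropy (sphere_rotation k) x" "x$i$1 \<noteq> 0 \<or> x$i$2 \<noteq> 0"
  shows "circle_char (k i) g = 1"
proof -
  have "rotate_z (circle_char (k i) g) (x$i) = x$i"
    using assms(1) by (auto simp: isotropy_def vec_eq_iff)
  then show ?thesis using assms(2) by (rule rotate_z_fixed_point_eq_1)
qed

lemma isotropy_rep_iso_sphere_rotation:
  fixes \<rho> :: "complex \<Rightarrow> complex^'n^'n" and Q :: "complex^'n \<Rightarrow> complex^'n"
  assumes Q: "linear Q" "bij Q"
    and Q_\<rho>: "\<And>g u. g \<in> circle_group \<Longrightarrow> Q (\<rho> g *v u) = (\<chi> i. circle_char (k i) g * Q u $ i)"
    and x: "x \<in> sphere_product"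
  shows "isotropy_rep_iso (sphere_rotation k) sphere_product \<rho> x"
proof -
  obtain \<iota> :: "'n \<Rightarrow> complex \<Rightarrow> real^3"
    where \<iota>: "\<And>i. linear (\<iota> i)" "\<And>i. inj (\<iota> i)" "\<And>i. range (\<iota> i) = {w. w \<bullet> x$i = 0}"
      "\<And>i c z. x$i$1 = 0 \<Longrightarrow> x$i$2 = 0 \<Longrightarrow> rotate_z c (\<iota> i z) = \<iota> i (c * z)"
    using sphere_product_tangent_params[OF x] by blast
  define \<phi> where "\<phi> u = (\<chi> i. \<iota> i (Q u $ i))" for u
  have "linear \<phi>" "inj \<phi>" and range_\<phi>: "range \<phi> = {v. \<forall>i. v $ i \<in> range (\<iota> i)}"
    unfolding \<phi>_def using vec_lambda_compose_linear_bij[OF Q \<iota>(1,2)] by simp_all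
  moreover have "range \<phi> = tangent_space sphere_product x"
    using range_\<phi> \<iota>(3) by (simp add: tangent_space_sphere_product[OF x])
  moreover have "sphere_rotation k g (\<phi> u) = \<phi> (\<rho> g *v u)"
    if g: "g \<in> isotropy (sphere_rotation k) x" for g u
  proof -
    have "rotate_z (circle_char (k i) g) (\<iota> i z) = \<iota> i (circle_char (k i) g * z)" for i z
      using \<iota>(4) isotropy_sphere_rotation_off_axis[OF g, of i] by (cases "x$i$1 = 0 \<and> x$i$2 = 0")
        (simp_all add: rotate_z_one)
    then show ?thesis using g by (simp add: \<phi>_def Q_\<rho> vec_eq_iff isotropy_def)
  qed
  ultimately show ?thesis
    using linear_sphere_rotation by (intro isotropy_rep_iso_linear_action) auto
qed

theorem lemma4p4:
  fixes \<rho> :: "complex \<Rightarrow> complex^'n^'n"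
  assumes "unitary_rep \<rho>"
  shows "\<exists>a :: complex \<Rightarrow> real^3^'n \<Rightarrow> real^3^'n.
           smooth_circle_action a sphere_product \<and>
           (\<forall>x\<in>sphere_product. isotropy_rep_iso a sphere_product \<rho> x)"
proof -
  obtain Q :: "complex^'n \<Rightarrow> complex^'n" and k :: "'n \<Rightarrow> int"
    where "linear Q" "bij Q"
      "\<And>g u. g \<in> circle_group \<Longrightarrow> Q (\<rho> g *v u) = (\<chi> i. circle_char (k i) g * Q u $ i)"
    using unitary_rep_diagonalisation[OF assms] by blast
  then show ?thesis
    using smooth_circle_action_sphere_rotation isotropy_rep_iso_sphere_rotation by blast
qed

end
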